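(* There is an absolute constant $c>0$ such that for all integers $n\ge k\ge1$ and $m\ge2$: if $R\sim\mathcal{D}^{n\times k}$, then for every $x\in S^{k-1}$ and every $\varepsilon\ge\varepsilon_0:=\sqrt{\log_2 m}/m$, $$\Pr\left[\|Rx\|_2\le\varepsilon\sqrt n\right]\le (c\varepsilon)^{n/2}.$$
   Context: For an integer $m\ge1$, $\mathcal{D}$ denotes the uniform distribution on $\{a/m: a\in\{-m,\ldots,m\}\}$, and $\mathcal{D}^{n\times k}$ the distribution of an $n\times k$ random matrix with independent $\mathcal{D}$-distributed entries. $S^{k-1}=\{x\in\mathbb{R}^k:\|x\|_2=1\}$. *)

theory Defs
  imports "HOL-Probability.Probability"
begin

definition D_vals :: "nat \<Rightarrow> real set" where
  "D_vals m = (\<lambda>a::int. real_of_int a / real m) ` {- int m .. int m}"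

text \<open>Random n x k matrix with iid D-entries, represented as a function on index
  pairs {..<n} x {..<k} (extensional: undefined outside), uniformly distributed.\<close>
definition rand_mat :: "nat \<Rightarrow> nat \<Rightarrow> nat \<Rightarrow> (nat \<times> nat \<Rightarrow> real) pmf" where
  "rand_mat n k m = pmf_of_set (PiE ({..<n} \<times> {..<k}) (\<lambda>_. D_vals m))"

definition matvec_norm :: "nat \<Rightarrow> nat \<Rightarrow> (nat \<times> nat \<Rightarrow> real) \<Rightarrow> (nat \<Rightarrow> real) \<Rightarrow> real" where
  "matvec_norm n k R x = sqrt (\<Sum>i<n. (\<Sum>j<k. R (i, j) * x j)\<^sup>2)"

end

theory Submission
  imports Defs
begin

(* The Fejer kernel F(z) = 2(1 - cos z)/z^2 = 2 \<integral>\<^sub>0\<^sup>1 (1 - t) cos (t z) dt is nonnegative and at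
   least 1/2 on [-1, 1].  Averaged over a row r of R it becomes
   2 \<integral>\<^sub>0\<^sup>1 (1 - t) \<Prod>\<^sub>j \<phi>(t x\<^sub>j / \<sigma>) dt, where \<phi> is the characteristic function of D.
   Near 0 we have \<phi>(v) \<le> 1 - v^2/9, away from 0 the Dirichlet kernel gives |\<phi>(v)| \<le> 11/(10|v|)
   as long as |v| \<le> m, and weighted AM-GM with weights x\<^sub>j^2 reduces the product to one
   coordinate at a time; hence the row average is O(\<surd>\<sigma>) whenever \<sigma> \<ge> 1/m.
   Summing rescaled kernels F(y/(\<epsilon> 2^l)) with weights 4^-l yields g(y) \<ge> 1/(8(1 + y^2/\<epsilon>^2))
   with row average O(\<surd>\<epsilon>).  As 1 + s \<le> e^s, the indicator of |Rx| \<le> \<epsilon>\<surd>n is at most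
   (8e)^n \<Prod>\<^sub>i g((Rx)\<^sub>i), and independence of the rows gives the bound (512 e \<surd>\<epsilon>)^n. *)

lemma sin_ge_cubic:
  fixes y :: real
  assumes "0 \<le> y"
  shows "y - y^3/6 \<le> sin y"
proof -
  have "\<bar>sin y - (\<Sum>m<3. sin_coeff m * y ^ m)\<bar> \<le> inverse (fact 3) * \<bar>y\<bar> ^ 3"
    by (rule Maclaurin_sin_bound)
  moreover have "(\<Sum>m<3. sin_coeff m * y ^ m) = y"
    by (simp add: sin_coeff_def numeral_3_eq_3 lessThan_Suc)
  ultimately have "\<bar>sin y - y\<bar> \<le> y^3/6"
    using assms by (simp add: fact_numeral)
  then show ?thesis
    by linarith
qed

lemma cos_ge_quadratic: "1 - x^2/2 \<le> cos (x::real)"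
proof -
  have "\<bar>sin (x/2)\<bar>^2 \<le> \<bar>x/2\<bar>^2"
    by (intro power_mono abs_sin_x_le_abs_x) simp
  then show ?thesis
    using cos_double_sin[of "x/2"] by (simp add: power_divide)
qed

lemma cos_le_quadratic:
  fixes x :: real
  assumes "\<bar>x\<bar> \<le> 2"
  shows "cos x \<le> 1 - x^2/3"
proof -
  define y where "y = \<bar>x\<bar>/2"
  have y: "0 \<le> y" "y \<le> 1"
    using assms by (auto simp: y_def)
  have "y^3 \<le> y"
    using y power_decreasing[of 1 3 y] by simp
  then have "5/6 * y \<le> sin y"
    using sin_ge_cubic[OF y(1)] by linarith
  then have "(5/6 * y)^2 \<le> (sin y)^2"
    using y by (intro power_mono) auto
  moreover have "cos x = 1 - 2 * (sin y)^2"
    using cos_double_sin[of "\<bar>x\<bar>/2"] by (simp add: y_def)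
  ultimately have "cos x \<le> 1 - 25/72 * x^2"
    by (simp add: y_def power2_eq_square)
  moreover have "x^2/3 \<le> 25/72 * x^2"
    by simp
  ultimately show ?thesis
    by linarith
qed

lemma sum_cos_ge_quadratic: "real (card I) - (\<Sum>a\<in>I. (u a)^2) / 2 \<le> (\<Sum>a\<in>I. cos (u a))"
proof -
  have "(\<Sum>a\<in>I. 1 - (u a)^2 / 2) \<le> (\<Sum>a\<in>I. cos (u a))"
    by (intro sum_mono cos_ge_quadratic)
  then show ?thesis
    by (simp add: sum_subtractf sum_divide_distrib)
qed

lemma sum_cos_le_quadratic:
  assumes "\<And>a. a \<in> I \<Longrightarrow> \<bar>u a\<bar> \<le> 2"
  shows "(\<Sum>a\<in>I. cos (u a)) \<le> real (card I) - (\<Sum>a\<in>I. (u a)^2) / 3"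
proof -
  have "(\<Sum>a\<in>I. cos (u a)) \<le> (\<Sum>a\<in>I. 1 - (u a)^2 / 3)"
    using assms by (intro sum_mono cos_le_quadratic)
  then show ?thesis
    by (simp add: sum_subtractf sum_divide_distrib)
qed

lemma exp_neg_le_inverse_one_plus:
  fixes y :: real
  assumes "0 \<le> y"
  shows "exp (- y) \<le> 1 / (1 + y)"
proof -
  have "1 / exp y \<le> 1 / (1 + y)"
    using assms by (intro divide_left_mono) (auto simp: add_pos_nonneg)
  then show ?thesis
    by (simp add: exp_minus inverse_eq_divide)
qed

lemma one_minus_powr_le:
  fixes w p :: real
  assumes "0 \<le> w" "w < 1" "0 \<le> p"
  shows "(1 - w) powr p \<le> 1 / (1 + p * w)"
proof -
  have "p * ln (1 - w) \<le> p * (- w)"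
    using ln_le_minus_one[of "1 - w"] assms by (intro mult_left_mono) auto
  then have "(1 - w) powr p \<le> exp (- (p * w))"
    using assms by (simp add: powr_def)
  also have "\<dots> \<le> 1 / (1 + p * w)"
    using assms by (intro exp_neg_le_inverse_one_plus) simp
  finally show ?thesis .
qed

lemma powr_le_mult_powr_minus_one:
  fixes z c p :: real
  assumes "0 \<le> z" "z \<le> c" "1 \<le> p"
  shows "z powr p \<le> z * c powr (p - 1)"
proof (cases "z = 0")
  case False
  then have "z powr p = z * z powr (p - 1)"
    using powr_add[of z 1 "p - 1"] assms(1) by simp
  also have "\<dots> \<le> z * c powr (p - 1)"
    using assms by (intro mult_left_mono powr_mono2) auto
  finally show ?thesis .
qed simp

lemma powr_half_eq_sqrt_power:
  fixes z :: real
  assumes "0 < z"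
  shows "z powr (real n / 2) = sqrt z ^ n"
  using assms by (simp add: powr_half_sqrt_powr powr_realpow real_sqrt_power)

lemma inverse_one_plus_square_le:
  fixes u :: real
  assumes "0 \<le> u"
  shows "1 / (1 + u^2) \<le> 2 / (1 + u)"
proof -
  have "0 \<le> 2 * (u - 1/4)^2 + 7/8"
    by simp
  then have "1 + u \<le> 2 * (1 + u^2)"
    by (simp add: power2_eq_square algebra_simps)
  then show ?thesis
    using assms by (simp add: divide_simps add_pos_nonneg)
qed

lemma has_integral_inverse_shift:
  fixes c :: real
  assumes "0 < c"
  shows "((\<lambda>t. c / (t + c)) has_integral c * ln ((1 + c) / c)) {0..1}"
proof -
  have "((\<lambda>t. c / (t + c)) has_integral (c * ln (1 + c) - c * ln (0 + c))) {0..1}"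
  proof (rule fundamental_theorem_of_calculus)
    fix t :: real
    assume "t \<in> {0..1}"
    then have "0 < t + c"
      using assms by auto
    then have "((\<lambda>t. c * ln (t + c)) has_real_derivative c * (1 / (t + c))) (at t within {0..1})"
      by (auto intro!: derivative_eq_intros)
    then show "((\<lambda>t. c * ln (t + c)) has_vector_derivative c / (t + c)) (at t within {0..1})"
      by (simp add: has_real_derivative_iff_has_vector_derivative)
  qed simp
  then show ?thesis
    using assms by (simp add: ln_div algebra_simps)
qed

lemma mult_ln_one_plus_inverse_le:
  fixes c :: real
  assumes "0 < c"
  shows "c * ln ((1 + c) / c) \<le> 2 * sqrt c"
proof -
  define x where "x = 1 / c"
  have x: "0 < x" "(1 + c) / c = 1 + x" "c * sqrt x = sqrt c"
    using assms by (auto simp: x_def field_simps real_sqrt_divide)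
  have "sqrt (1 + x) \<le> sqrt ((1 + sqrt x)^2)"
    using x by (intro real_sqrt_le_mono) (simp add: power2_eq_square algebra_simps)
  then have "sqrt (1 + x) \<le> 1 + sqrt x"
    using x(1) by (simp add: add_nonneg_eq_0_iff)
  moreover have "ln (sqrt (1 + x)) \<le> sqrt (1 + x) - 1"
    using x by (intro ln_le_minus_one) simp
  ultimately have "ln (1 + x) \<le> 2 * sqrt x"
    using x by (simp add: ln_sqrt)
  then have "c * ln (1 + x) \<le> c * (2 * sqrt x)"
    using assms by (intro mult_left_mono) auto
  then show ?thesis
    using x by simp
qed

lemma prod_le_sum_weighted_powr:
  fixes w y :: "'a \<Rightarrow> real"
  assumes fin: "finite S" and w: "(\<Sum>i\<in>S. w i) = 1" "\<And>i. i \<in> S \<Longrightarrow> 0 < w i"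
    and y: "\<And>i. i \<in> S \<Longrightarrow> 0 \<le> y i"
  shows "(\<Prod>i\<in>S. y i) \<le> (\<Sum>i\<in>S. w i * y i powr (1 / w i))"
proof (cases "\<exists>i\<in>S. y i = 0")
  case True
  then have "(\<Prod>i\<in>S. y i) = 0"
    using fin by simp
  moreover have "0 \<le> (\<Sum>i\<in>S. w i * y i powr (1 / w i))"
    using w(2) by (intro sum_nonneg) (simp add: less_imp_le)
  ultimately show ?thesis
    by simp
next
  case False
  then have ypos: "0 < y i" if "i \<in> S" for i
    using y[OF that] that by force
  have "(\<Prod>i\<in>S. y i) = exp (\<Sum>i\<in>S. ln (y i))"
    using fin ypos by (simp add: exp_sum)
  also have "(\<Sum>i\<in>S. ln (y i)) = (\<Sum>i\<in>S. w i *\<^sub>R (ln (y i) / w i))"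
    using w(2) by (intro sum.cong) force+
  also have "exp (\<Sum>i\<in>S. w i *\<^sub>R (ln (y i) / w i)) \<le> (\<Sum>i\<in>S. w i * exp (ln (y i) / w i))"
    using fin w exp_convex by (intro convex_on_sum) (auto intro: less_imp_le)
  also have "\<dots> = (\<Sum>i\<in>S. w i * y i powr (1 / w i))"
    using ypos by (intro sum.cong) (force simp: powr_def)+
  finally show ?thesis .
qed

lemma abs_le_1_of_sum_squares_eq_1:
  fixes x :: "'a \<Rightarrow> real"
  assumes "finite J" "j \<in> J" "(\<Sum>j\<in>J. (x j)^2) = 1"
  shows "\<bar>x j\<bar> \<le> 1"
proof -
  have "(x j)^2 \<le> (\<Sum>j\<in>J. (x j)^2)"
    using assms by (intro member_le_sum) auto
  then show ?thesis
    using assms by (simp add: abs_square_le_1[symmetric])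
qed

lemma cis_sum: "finite A \<Longrightarrow> cis (\<Sum>a\<in>A. f a) = (\<Prod>a\<in>A. cis (f a))"
  by (induction A rule: finite_induct) (simp_all add: cis_mult[symmetric])

lemma sum_sin_symmetric_eq_0:
  fixes c :: real
  assumes "finite D" "\<And>d. d \<in> D \<Longrightarrow> - d \<in> D"
  shows "(\<Sum>d\<in>D. sin (c * d)) = 0"
proof -
  have "(\<Sum>d\<in>D. sin (c * d)) = (\<Sum>d\<in>D. sin (c * (- d)))"
    by (rule sum.reindex_bij_witness[of _ uminus uminus]) (auto intro: assms)
  then show ?thesis
    by (simp add: sum_negf)
qed

lemma sum_PiE_cos_sum:
  fixes c :: "'j \<Rightarrow> real"
  assumes "finite J" "finite D" "\<And>d. d \<in> D \<Longrightarrow> - d \<in> D"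
  shows "(\<Sum>r\<in>PiE J (\<lambda>_. D). cos (\<Sum>j\<in>J. c j * r j)) = (\<Prod>j\<in>J. \<Sum>d\<in>D. cos (c j * d))"
proof -
  have cis_eq: "(\<Sum>d\<in>D. cis (c j * d)) = complex_of_real (\<Sum>d\<in>D. cos (c j * d))" for j
    by (rule complex_eqI) (simp_all add: sum_sin_symmetric_eq_0 assms)
  have "(\<Sum>r\<in>PiE J (\<lambda>_. D). cis (\<Sum>j\<in>J. c j * r j)) = (\<Sum>r\<in>PiE J (\<lambda>_. D). \<Prod>j\<in>J. cis (c j * r j))"
    by (simp add: cis_sum assms)
  also have "\<dots> = (\<Prod>j\<in>J. \<Sum>d\<in>D. cis (c j * d))"
    by (rule prod_sum_PiE[symmetric]) (auto simp: assms)
  also have "\<dots> = complex_of_real (\<Prod>j\<in>J. \<Sum>d\<in>D. cos (c j * d))"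
    by (simp only: cis_eq of_real_prod)
  finally have "Re (\<Sum>r\<in>PiE J (\<lambda>_. D). cis (\<Sum>j\<in>J. c j * r j)) =
      Re (complex_of_real (\<Prod>j\<in>J. \<Sum>d\<in>D. cos (c j * d)))"
    by (rule arg_cong)
  then show ?thesis
    by (simp only: Re_sum cis.sel Re_complex_of_real)
qed

lemma bij_betw_PiE_rows:
  "bij_betw (\<lambda>R. \<lambda>i\<in>I. \<lambda>j. R (i, j)) (PiE (I \<times> J) (\<lambda>_. D)) (PiE I (\<lambda>_. PiE J (\<lambda>_. D)))"
proof (rule bij_betw_byWitness[where f' = "\<lambda>F. \<lambda>(i, j)\<in>I \<times> J. F i j"])
  show "\<forall>R\<in>PiE (I \<times> J) (\<lambda>_. D). (\<lambda>(i, j)\<in>I \<times> J. (\<lambda>i\<in>I. \<lambda>j. R (i, j)) i j) = R"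
    by (auto simp: PiE_def extensional_def fun_eq_iff)
  show "\<forall>F\<in>PiE I (\<lambda>_. PiE J (\<lambda>_. D)). (\<lambda>i\<in>I. \<lambda>j. (\<lambda>(i, j)\<in>I \<times> J. F i j) (i, j)) = F"
  proof (intro ballI ext)
    fix F i j
    assume F: "F \<in> PiE I (\<lambda>_. PiE J (\<lambda>_. D))"
    show "(\<lambda>i\<in>I. \<lambda>j. (\<lambda>(i, j)\<in>I \<times> J. F i j) (i, j)) i j = F i j"
      using PiE_arb[OF F] PiE_arb[OF PiE_mem[OF F]] by (cases "i \<in> I"; cases "j \<in> J") auto
  qed
  show "(\<lambda>R. \<lambda>i\<in>I. \<lambda>j. R (i, j)) ` PiE (I \<times> J) (\<lambda>_. D) \<subseteq> PiE I (\<lambda>_. PiE J (\<lambda>_. D))"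
    by (auto simp: PiE_def extensional_def Pi_def)
  show "(\<lambda>F. \<lambda>(i, j)\<in>I \<times> J. F i j) ` PiE I (\<lambda>_. PiE J (\<lambda>_. D)) \<subseteq> PiE (I \<times> J) (\<lambda>_. D)"
    by (auto simp: PiE_def Pi_def)
qed

lemma sum_PiE_prod_rows:
  fixes h :: "('b \<Rightarrow> 'c) \<Rightarrow> real"
  assumes "finite I" "finite J" "finite D"
  shows "(\<Sum>R\<in>PiE (I \<times> J) (\<lambda>_. D). \<Prod>i\<in>I. h (\<lambda>j. R (i, j))) = (\<Prod>i\<in>I. \<Sum>r\<in>PiE J (\<lambda>_. D). h r)"
proof -
  have "(\<Sum>R\<in>PiE (I \<times> J) (\<lambda>_. D). \<Prod>i\<in>I. h (\<lambda>j. R (i, j))) =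
      (\<Sum>R\<in>PiE (I \<times> J) (\<lambda>_. D). \<Prod>i\<in>I. h ((\<lambda>i\<in>I. \<lambda>j. R (i, j)) i))"
    by (intro sum.cong prod.cong) auto
  also have "\<dots> = (\<Sum>F\<in>PiE I (\<lambda>_. PiE J (\<lambda>_. D)). \<Prod>i\<in>I. h (F i))"
    using bij_betw_PiE_rows by (rule sum.reindex_bij_betw)
  also have "\<dots> = (\<Prod>i\<in>I. \<Sum>r\<in>PiE J (\<lambda>_. D). h r)"
    using assms by (intro prod_sum_PiE[symmetric]) (auto simp: finite_PiE)
  finally show ?thesis .
qed

lemma card_Int_le_sum:
  fixes f :: "'a \<Rightarrow> real"
  assumes "finite \<Omega>" "\<And>\<omega>. \<omega> \<in> \<Omega> \<inter> A \<Longrightarrow> 1 \<le> f \<omega>" "\<And>\<omega>. \<omega> \<in> \<Omega> \<Longrightarrow> 0 \<le> f \<omega>"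
  shows "real (card (\<Omega> \<inter> A)) \<le> (\<Sum>\<omega>\<in>\<Omega>. f \<omega>)"
proof -
  have "real (card (\<Omega> \<inter> A)) = (\<Sum>\<omega>\<in>\<Omega> \<inter> A. 1)"
    by simp
  also have "\<dots> \<le> (\<Sum>\<omega>\<in>\<Omega> \<inter> A. f \<omega>)"
    using assms(2) by (intro sum_mono)
  also have "\<dots> \<le> (\<Sum>\<omega>\<in>\<Omega>. f \<omega>)"
    using assms by (intro sum_mono2) auto
  finally show ?thesis .
qed

lemma symmetric_int_interval_Suc:
  "{- int (Suc m) .. int (Suc m)} = insert (- int (Suc m)) (insert (int (Suc m)) {- int m .. int m})"
  by auto

lemma sin_half_mult_sum_cos:
  fixes t :: real
  shows "sin (t/2) * (\<Sum>a\<in>{- int m .. int m}. cos (of_int a * t)) = sin ((real m + 1/2) * t)"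
proof (induction m)
  case 0
  then show ?case
    by simp
next
  case (Suc m)
  have "(\<Sum>a\<in>{- int (Suc m) .. int (Suc m)}. cos (of_int a * t)) =
      (\<Sum>a\<in>{- int m .. int m}. cos (of_int a * t)) + 2 * cos ((real m + 1) * t)"
    unfolding symmetric_int_interval_Suc
    by (simp add: algebra_simps minus_add_distrib[symmetric] del: minus_add_distrib)
  moreover have "sin (t/2) * (2 * cos ((real m + 1) * t)) =
      sin ((real m + 1) * t + t/2) - sin ((real m + 1) * t - t/2)"
    by (simp add: sin_add sin_diff)
  ultimately show ?case
    using Suc by (simp add: distrib_left algebra_simps)
qed

lemma sum_squares_symmetric_int_interval:
  "(\<Sum>a\<in>{- int m .. int m}. (of_int a :: real)^2) = real m * (real m + 1) * (2 * real m + 1) / 3"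
proof (induction m)
  case (Suc m)
  then show ?case
    unfolding symmetric_int_interval_Suc by (simp add: algebra_simps power2_eq_square)
qed simp

lemma sum_squares_scaled_symmetric_int_interval:
  assumes "0 < m"
  shows "(\<Sum>a\<in>{- int m .. int m}. (of_int a * v / real m)^2) =
    (2 * real m + 1) * (v^2 / 3 * ((real m + 1) / real m))"
proof -
  have "(\<Sum>a\<in>{- int m .. int m}. (of_int a * v / real m)^2) =
      v^2 / (real m)^2 * (\<Sum>a\<in>{- int m .. int m}. (of_int a :: real)^2)"
    by (simp add: sum_distrib_left sum_divide_distrib power_mult_distrib power_divide mult_ac)
  also have "\<dots> = (2 * real m + 1) * (v^2 / 3 * ((real m + 1) / real m))"
    unfolding sum_squares_symmetric_int_interval
    using assms by (simp add: power2_eq_square field_simps)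
  finally show ?thesis .
qed

section \<open>The distribution \<open>\<D>\<close> and its characteristic function\<close>

lemma D_vals_finite: "finite (D_vals m)"
  by (simp add: D_vals_def)

lemma D_vals_uminus: "d \<in> D_vals m \<Longrightarrow> - d \<in> D_vals m"
  unfolding D_vals_def by (auto intro!: image_eqI[where x = "- _"])

lemma zero_in_D_vals: "0 \<in> D_vals m"
  unfolding D_vals_def by (rule image_eqI[where x = 0]) auto

lemma inj_on_D_vals: "0 < m \<Longrightarrow> inj_on (\<lambda>a::int. real_of_int a / real m) A"
  by (rule inj_onI) simp

lemma card_D_vals: "0 < m \<Longrightarrow> card (D_vals m) = 2 * m + 1"
  unfolding D_vals_def by (simp add: card_image inj_on_D_vals)

lemma abs_D_vals_le_1: "d \<in> D_vals m \<Longrightarrow> \<bar>d\<bar> \<le> 1"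
  by (cases "m = 0") (auto simp: D_vals_def abs_divide divide_le_eq)

definition D_charfun :: "nat \<Rightarrow> real \<Rightarrow> real" where
  "D_charfun m v = (\<Sum>a\<in>{- int m .. int m}. cos (of_int a * v / real m)) / (2 * real m + 1)"

lemma D_charfun_0: "D_charfun m 0 = 1"
  by (simp add: D_charfun_def)

lemma continuous_on_D_charfun:
  fixes f :: "real \<Rightarrow> real"
  assumes "continuous_on A f"
  shows "continuous_on A (\<lambda>t. D_charfun m (f t))"
  unfolding D_charfun_def times_divide_eq_left[symmetric] by (intro continuous_intros assms) auto

lemma sum_D_vals_cos:
  assumes "0 < m"
  shows "(\<Sum>d\<in>D_vals m. cos (c * d)) = (2 * real m + 1) * D_charfun m c"
proof -
  have "(\<Sum>d\<in>D_vals m. cos (c * d)) = (\<Sum>a\<in>{- int m .. int m}. cos (of_int a * c / real m))"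
    unfolding D_vals_def using assms by (simp add: sum.reindex inj_on_D_vals mult.commute)
  then show ?thesis
    by (simp add: D_charfun_def add_pos_nonneg)
qed

lemma D_charfun_near_0:
  assumes m: "2 \<le> m" and v: "\<bar>v\<bar> \<le> 2"
  shows "0 \<le> D_charfun m v \<and> D_charfun m v \<le> 1 - v^2/9"
proof -
  define I where "I = {- int m .. int m}"
  define N where "N = 2 * real m + 1"
  define q where "q = v^2 / 3 * ((real m + 1) / real m)"
  define u where "u a = of_int a * v / real m" for a :: int
  have mpos: "0 < real m"
    using m by simp
  have N: "0 < N" "real (card I) = N"
    by (simp_all add: N_def I_def)
  have sum_u_sq: "(\<Sum>a\<in>I. (u a)^2) = N * q"
    using m by (simp add: I_def u_def N_def q_def sum_squares_scaled_symmetric_int_interval)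
  have "\<bar>u a\<bar> \<le> 2" if "a \<in> I" for a
  proof -
    have "\<bar>of_int a\<bar> * \<bar>v\<bar> \<le> real m * 2"
      using that v by (intro mult_mono) (auto simp: I_def)
    then show ?thesis
      using mpos by (simp add: u_def abs_mult abs_divide divide_le_eq)
  qed
  then have "(\<Sum>a\<in>I. cos (u a)) \<le> N * (1 - q/3)"
    using sum_cos_le_quadratic[of I u] N sum_u_sq by (simp add: algebra_simps)
  then have upper: "D_charfun m v \<le> 1 - q/3"
    using N by (simp add: D_charfun_def I_def u_def N_def[symmetric] divide_le_eq mult.commute)
  have "N * (1 - q/2) \<le> (\<Sum>a\<in>I. cos (u a))"
    using sum_cos_ge_quadratic[of I u] N sum_u_sq by (simp add: algebra_simps)
  then have lower: "1 - q/2 \<le> D_charfun m v"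
    using N by (simp add: D_charfun_def I_def u_def N_def[symmetric] le_divide_eq mult.commute)
  have "v^2/3 * 1 \<le> q"
    unfolding q_def using mpos by (intro mult_left_mono) auto
  moreover have "q \<le> 4/3 * (3/2)"
  proof -
    have "\<bar>v\<bar>^2 \<le> 2^2"
      using v by (intro power_mono) auto
    moreover have "(real m + 1) / real m \<le> 3/2"
      using m mpos by (simp add: field_simps)
    ultimately show ?thesis
      unfolding q_def by (intro mult_mono) auto
  qed
  ultimately show ?thesis
    using upper lower by linarith
qed

lemma D_charfun_decay:
  assumes m: "1 \<le> m" and v: "v \<noteq> 0" "\<bar>v\<bar> \<le> real m"
  shows "\<bar>D_charfun m v\<bar> \<le> 11 / (10 * \<bar>v\<bar>)"
proof -
  define \<theta> where "\<theta> = v / real m"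
  define S where "S = (\<Sum>a\<in>{- int m .. int m}. cos (of_int a * \<theta>))"
  define y where "y = \<bar>\<theta>\<bar>/2"
  have mpos: "0 < real m"
    using m by simp
  have y: "0 < y" "y \<le> 1/2" "y = \<bar>v\<bar> / (2 * real m)"
    using v mpos by (auto simp: y_def \<theta>_def abs_divide divide_le_eq)
  have "y * y \<le> (1/2) * (1/2)"
    using y(1,2) by (intro mult_mono) auto
  then have "y^3 \<le> 1/4 * y"
    using y(1) by (simp add: power3_eq_cube mult_right_mono)
  then have "23/24 * y \<le> sin y"
    using sin_ge_cubic[of y] y by linarith
  then have "23/24 * y * \<bar>S\<bar> \<le> sin y * \<bar>S\<bar>"
    by (rule mult_right_mono) simp
  also have "sin y = \<bar>sin (\<theta>/2)\<bar>"
    using y(1,2) pi_gt3 sin_ge_zero[of y] by (cases "\<theta> \<ge> 0") (auto simp: y_def)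
  also have "\<bar>sin (\<theta>/2)\<bar> * \<bar>S\<bar> \<le> 1"
    using sin_half_mult_sum_cos[of \<theta> m] by (simp add: S_def abs_mult[symmetric])
  finally have "23/24 * y * \<bar>S\<bar> \<le> 1" .
  then have "\<bar>S\<bar> \<le> 24 / (23 * y)"
    using y(1) by (simp add: field_simps)
  then have "\<bar>D_charfun m v\<bar> \<le> 24 / (23 * y) / (2 * real m + 1)"
    unfolding D_charfun_def S_def \<theta>_def
    by (simp add: abs_divide times_divide_eq_right divide_right_mono flip: divide_divide_eq_left)
  also have "\<dots> = 48 * real m / (23 * (2 * real m + 1)) / \<bar>v\<bar>"
    unfolding y(3) using mpos v by (simp add: field_simps)
  also have "\<dots> \<le> 11 / 10 / \<bar>v\<bar>"
    using mpos by (intro divide_right_mono) (simp_all add: field_simps)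
  finally show ?thesis
    by simp
qed

lemma D_charfun_powr_near_0:
  assumes m: "2 \<le> m" and \<sigma>: "0 < \<sigma>" and a: "a \<noteq> 0" "\<bar>a\<bar> \<le> 1" and t: "0 \<le> t"
    and v: "\<bar>t * a / \<sigma>\<bar> \<le> 2"
  shows "\<bar>D_charfun m (t * a / \<sigma>)\<bar> powr (1 / a^2) \<le> 2 * (3 * \<sigma> / (t + 3 * \<sigma>))"
proof -
  define v where "v = t * a / \<sigma>"
  define p where "p = 1 / a^2"
  have p: "1 \<le> p"
    using a by (simp add: p_def abs_square_le_1)
  have "\<bar>v\<bar> \<le> 2"
    using v by (simp add: v_def)
  then have "v^2 \<le> 2^2"
    by (metis abs_le_square_iff abs_numeral)
  have "\<bar>D_charfun m v\<bar> powr p \<le> (1 - v^2/9) powr p"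
    using D_charfun_near_0[OF m \<open>\<bar>v\<bar> \<le> 2\<close>] p by (intro powr_mono2) auto
  also have "\<dots> \<le> 1 / (1 + p * (v^2/9))"
    using \<open>v^2 \<le> 2^2\<close> p by (intro one_minus_powr_le) auto
  also have "p * (v^2/9) = (t / (3 * \<sigma>))^2"
    using a by (simp add: p_def v_def power_mult_distrib power_divide)
  also have "1 / (1 + (t / (3 * \<sigma>))^2) \<le> 2 / (1 + t / (3 * \<sigma>))"
    using \<sigma> t by (intro inverse_one_plus_square_le) simp
  also have "\<dots> = 2 * (3 * \<sigma> / (t + 3 * \<sigma>))"
    using \<sigma> by (simp add: field_simps)
  finally show ?thesis
    by (simp add: v_def p_def)
qed

lemma D_charfun_powr_far:
  assumes m: "2 \<le> m" and \<sigma>: "0 < \<sigma>" and a: "a \<noteq> 0" "\<bar>a\<bar> \<le> 1" and t: "0 \<le> t"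
    and v: "2 < \<bar>t * a / \<sigma>\<bar>" "\<bar>t * a / \<sigma>\<bar> \<le> real m"
  shows "\<bar>D_charfun m (t * a / \<sigma>)\<bar> powr (1 / a^2) \<le>
    33/20 * (11/20) powr (1 / a^2 - 1) * (\<sigma> / \<bar>a\<bar> / (t + \<sigma> / \<bar>a\<bar>))"
proof -
  define v where "v = t * a / \<sigma>"
  define p where "p = 1 / a^2"
  define b where "b = \<sigma> / \<bar>a\<bar>"
  have b: "0 < b" and p: "1 \<le> p" and abs_v: "\<bar>v\<bar> = t / b"
    using \<sigma> a t by (auto simp: b_def p_def v_def abs_square_le_1 abs_mult abs_divide)
  have decay: "\<bar>D_charfun m v\<bar> \<le> 11 / (10 * \<bar>v\<bar>)"
    using m v by (intro D_charfun_decay) (auto simp: v_def)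
  also have "\<dots> \<le> 11 / (10 * 2)"
    using v by (intro divide_left_mono) (auto simp: v_def)
  finally have "\<bar>D_charfun m v\<bar> powr p \<le> \<bar>D_charfun m v\<bar> * (11/20) powr (p - 1)"
    using p by (intro powr_le_mult_powr_minus_one) auto
  also have "\<dots> \<le> 33/20 * (b / (t + b)) * (11/20) powr (p - 1)"
  proof (rule mult_right_mono)
    have "2 * b < t"
      using v abs_v pos_less_divide_eq[OF b, of 2 t] by (simp add: v_def mult.commute)
    then have "11 / (10 * \<bar>v\<bar>) \<le> 33/20 * (b / (t + b))"
      using b unfolding abs_v by (simp add: field_simps)
    then show "\<bar>D_charfun m v\<bar> \<le> 33/20 * (b / (t + b))"
      using decay by linarith
  qed simp
  finally show ?thesis
    by (simp add: v_def p_def b_def mult_ac)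
qed

text \<open>A majorant of \<open>|\<phi>(t a / \<sigma>)|\<^bsup>1/a\<^sup>2\<^esup>\<close> for \<open>t \<in> [0, 1]\<close>: the first term
  covers small arguments of \<open>\<phi>\<close>, the second its decay.\<close>
definition D_charfun_majorant :: "real \<Rightarrow> real \<Rightarrow> real \<Rightarrow> real" where
  "D_charfun_majorant \<sigma> a t =
    2 * (3 * \<sigma> / (t + 3 * \<sigma>)) + 33/20 * (11/20) powr (1 / a^2 - 1) * (\<sigma> / \<bar>a\<bar> / (t + \<sigma> / \<bar>a\<bar>))"

lemma D_charfun_powr_le:
  assumes m: "2 \<le> m" and \<sigma>: "1 / real m \<le> \<sigma>" and a: "a \<noteq> 0" "\<bar>a\<bar> \<le> 1"
    and t: "0 \<le> t" "t \<le> 1"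
  shows "\<bar>D_charfun m (t * a / \<sigma>)\<bar> powr (1 / a^2) \<le> D_charfun_majorant \<sigma> a t"
proof -
  have "0 < 1 / real m"
    using m by simp
  then have \<sigma>pos: "0 < \<sigma>"
    using \<sigma> by linarith
  have near: "0 \<le> 2 * (3 * \<sigma> / (t + 3 * \<sigma>))"
    and far: "0 \<le> 33/20 * (11/20) powr (1 / a^2 - 1) * (\<sigma> / \<bar>a\<bar> / (t + \<sigma> / \<bar>a\<bar>))"
    using \<sigma>pos a t by (auto intro!: mult_nonneg_nonneg divide_nonneg_nonneg)
  show ?thesis
  proof (cases "\<bar>t * a / \<sigma>\<bar> \<le> 2")
    case True
    then show ?thesis
      using D_charfun_powr_near_0[OF m \<sigma>pos a t(1)] far by (simp add: D_charfun_majorant_def)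
  next
    case False
    have "t * \<bar>a\<bar> \<le> 1"
      using t a by (simp add: mult_le_one)
    then have "\<bar>t * a / \<sigma>\<bar> \<le> 1 / \<sigma>"
      using t \<sigma>pos by (simp add: abs_mult abs_divide divide_right_mono)
    also have "\<dots> \<le> real m"
      using \<sigma> \<sigma>pos m by (simp add: divide_le_eq mult.commute)
    finally show ?thesis
      using D_charfun_powr_far[OF m \<sigma>pos a t(1)] False near by (simp add: D_charfun_majorant_def)
  qed
qed

lemma decay_term_coefficient_le:
  fixes a \<sigma> :: real
  assumes a: "a \<noteq> 0" "\<bar>a\<bar> \<le> 1" and \<sigma>: "0 < \<sigma>"
  shows "33/20 * (11/20) powr (1 / a^2 - 1) * (2 * sqrt (\<sigma> / \<bar>a\<bar>)) \<le> 9 * sqrt \<sigma>"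
proof -
  have "\<bar>a\<bar> * \<bar>a\<bar> \<le> \<bar>a\<bar> * 1"
    using a by (intro mult_left_mono) auto
  then have a2: "0 < a^2" "a^2 \<le> \<bar>a\<bar>" "\<bar>a\<bar> \<le> sqrt \<bar>a\<bar>"
    using a(1) by (simp_all only: zero_less_power2)
      (simp_all add: power2_eq_square abs_mult[symmetric] real_le_rsqrt)
  have q: "0 \<le> 1 / a^2 - 1"
    using a2 a by (simp add: field_simps abs_square_le_1)
  have "(11/20) powr (1 / a^2 - 1) = (1 - 9/20) powr (1 / a^2 - 1)"
    by simp
  also have "\<dots> \<le> 1 / (1 + (1 / a^2 - 1) * (9/20))"
    using q by (intro one_minus_powr_le) auto
  also have "\<dots> = 20 * a^2 / (11 * a^2 + 9)"
    using a2 by (simp add: field_simps)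
  also have "\<dots> \<le> 20 * a^2 / 9"
    using a2(1) by (intro divide_left_mono mult_pos_pos add_pos_nonneg) auto
  finally have "(11/20) powr (1 / a^2 - 1) / sqrt \<bar>a\<bar> \<le> 20 * a^2 / 9 / sqrt \<bar>a\<bar>"
    by (rule divide_right_mono) simp
  also have "\<dots> \<le> 20/9"
    using a a2 by (simp add: divide_le_eq)
  finally have "33/10 * sqrt \<sigma> * ((11/20) powr (1 / a^2 - 1) / sqrt \<bar>a\<bar>) \<le> 33/10 * sqrt \<sigma> * (20/9)"
    using \<sigma> by (intro mult_left_mono) auto
  moreover have "33/20 * (11/20) powr (1 / a^2 - 1) * (2 * sqrt (\<sigma> / \<bar>a\<bar>)) =
      33/10 * sqrt \<sigma> * ((11/20) powr (1 / a^2 - 1) / sqrt \<bar>a\<bar>)"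
    by (simp add: real_sqrt_divide)
  moreover have "33/10 * sqrt \<sigma> * (20/9) \<le> 9 * sqrt \<sigma>"
    using \<sigma> by simp
  ultimately show ?thesis
    by linarith
qed

lemma integral_D_charfun_majorant_le:
  assumes a: "a \<noteq> 0" "\<bar>a\<bar> \<le> 1" and \<sigma>: "0 < \<sigma>"
  shows "D_charfun_majorant \<sigma> a integrable_on {0..1}"
    and "integral {0..1} (D_charfun_majorant \<sigma> a) \<le> 16 * sqrt \<sigma>"
proof -
  define K where "K = 33/20 * (11/20) powr (1 / a^2 - 1)"
  define b where "b = \<sigma> / \<bar>a\<bar>"
  have b: "0 < b"
    using a \<sigma> by (simp add: b_def)
  have integral: "(D_charfun_majorant \<sigma> a has_integral
      2 * (3 * \<sigma> * ln ((1 + 3 * \<sigma>) / (3 * \<sigma>))) + K * (b * ln ((1 + b) / b))) {0..1}"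
    unfolding D_charfun_majorant_def K_def b_def[symmetric] using \<sigma> b
    by (intro has_integral_add has_integral_mult_right has_integral_inverse_shift) auto
  then show "D_charfun_majorant \<sigma> a integrable_on {0..1}"
    by blast
  have "2 * (3 * \<sigma> * ln ((1 + 3 * \<sigma>) / (3 * \<sigma>))) \<le> 2 * (2 * sqrt 3 * sqrt \<sigma>)"
    using \<sigma> mult_ln_one_plus_inverse_le[of "3 * \<sigma>"] by (simp add: real_sqrt_mult mult_ac)
  also have "\<dots> \<le> 7 * sqrt \<sigma>"
    using \<sigma> real_le_lsqrt[of "7/4" 3] by (simp add: power2_eq_square)
  finally have near: "2 * (3 * \<sigma> * ln ((1 + 3 * \<sigma>) / (3 * \<sigma>))) \<le> 7 * sqrt \<sigma>" .
  have "K * (b * ln ((1 + b) / b)) \<le> K * (2 * sqrt b)"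
    using b by (intro mult_left_mono mult_ln_one_plus_inverse_le) (auto simp: K_def)
  also have "\<dots> \<le> 9 * sqrt \<sigma>"
    unfolding K_def b_def using a \<sigma> by (rule decay_term_coefficient_le)
  finally show "integral {0..1} (D_charfun_majorant \<sigma> a) \<le> 16 * sqrt \<sigma>"
    using near integral_unique[OF integral] by linarith
qed

lemma prod_abs_D_charfun_le:
  assumes m: "2 \<le> m" and \<sigma>: "1 / real m \<le> \<sigma>" and J: "finite J" "\<And>j. j \<in> J \<Longrightarrow> x j \<noteq> 0"
    and x: "(\<Sum>j\<in>J. (x j)^2) = 1" and t: "0 \<le> t" "t \<le> 1"
  shows "(\<Prod>j\<in>J. \<bar>D_charfun m (t * x j / \<sigma>)\<bar>) \<le> (\<Sum>j\<in>J. (x j)^2 * D_charfun_majorant \<sigma> (x j) t)"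
proof -
  have "(\<Prod>j\<in>J. \<bar>D_charfun m (t * x j / \<sigma>)\<bar>) \<le>
      (\<Sum>j\<in>J. (x j)^2 * \<bar>D_charfun m (t * x j / \<sigma>)\<bar> powr (1 / (x j)^2))"
    using J x by (intro prod_le_sum_weighted_powr) auto
  also have "\<dots> \<le> (\<Sum>j\<in>J. (x j)^2 * D_charfun_majorant \<sigma> (x j) t)"
    using J x abs_le_1_of_sum_squares_eq_1
    by (intro sum_mono mult_left_mono D_charfun_powr_le m \<sigma> t) auto
  finally show ?thesis .
qed

lemma integral_prod_D_charfun_le:
  assumes m: "2 \<le> m" and \<sigma>: "1 / real m \<le> \<sigma>" and J: "finite J" and x: "(\<Sum>j\<in>J. (x j)^2) = 1"
  shows "integral {0..1} (\<lambda>t. (1 - t) * (\<Prod>j\<in>J. D_charfun m (t * x j / \<sigma>))) \<le> 16 * sqrt \<sigma>"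
proof -
  have "0 < 1 / real m"
    using m by simp
  then have \<sigma>pos: "0 < \<sigma>"
    using \<sigma> by linarith
  define J' where "J' = {j\<in>J. x j \<noteq> 0}"
  have J': "finite J'" "J' \<subseteq> J" "(\<Sum>j\<in>J'. (x j)^2) = 1"
    using J x sum.mono_neutral_right[of J J' "\<lambda>j. (x j)^2"] by (auto simp: J'_def)
  have x_J': "x j \<noteq> 0" "\<bar>x j\<bar> \<le> 1" if "j \<in> J'" for j
    using that J' abs_le_1_of_sum_squares_eq_1[OF J'(1) _ J'(3)] by (auto simp: J'_def)
  define H where "H t = (\<Sum>j\<in>J'. (x j)^2 * D_charfun_majorant \<sigma> (x j) t)" for t
  have H: "H integrable_on {0..1}"
    unfolding H_def using x_J' \<sigma>pos J'
    by (intro integrable_sum integrable_on_cmult_left) (auto intro: integral_D_charfun_majorant_le)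
  have pointwise: "(1 - t) * (\<Prod>j\<in>J. D_charfun m (t * x j / \<sigma>)) \<le> H t" if t: "t \<in> {0..1}" for t
  proof -
    have "(1 - t) * (\<Prod>j\<in>J. D_charfun m (t * x j / \<sigma>)) \<le> (1 - t) * \<bar>\<Prod>j\<in>J. D_charfun m (t * x j / \<sigma>)\<bar>"
      using t by (intro mult_left_mono) auto
    also have "\<dots> \<le> (\<Prod>j\<in>J. \<bar>D_charfun m (t * x j / \<sigma>)\<bar>)"
      using t by (simp add: abs_prod mult_left_le_one_le prod_nonneg)
    also have "\<dots> = (\<Prod>j\<in>J'. \<bar>D_charfun m (t * x j / \<sigma>)\<bar>)"
      using J J' by (intro prod.mono_neutral_right) (auto simp: J'_def D_charfun_0)
    also have "\<dots> \<le> H t"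
      unfolding H_def using J' t m \<sigma> by (intro prod_abs_D_charfun_le) (auto simp: J'_def)
    finally show ?thesis .
  qed
  have "continuous_on {0..1} (\<lambda>t. (1 - t) * (\<Prod>j\<in>J. D_charfun m (t * x j / \<sigma>)))"
    using \<sigma>pos by (intro continuous_intros continuous_on_D_charfun) auto
  then have "integral {0..1} (\<lambda>t. (1 - t) * (\<Prod>j\<in>J. D_charfun m (t * x j / \<sigma>))) \<le> integral {0..1} H"
    by (rule integral_le[OF integrable_continuous_interval H pointwise])
  also have "\<dots> = (\<Sum>j\<in>J'. (x j)^2 * integral {0..1} (D_charfun_majorant \<sigma> (x j)))"
    unfolding H_def using x_J' \<sigma>pos J'(1)
    by (subst integral_sum) (auto intro: integrable_on_cmult_left integral_D_charfun_majorant_le)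
  also have "\<dots> \<le> (\<Sum>j\<in>J'. (x j)^2 * (16 * sqrt \<sigma>))"
    using x_J' \<sigma>pos by (intro sum_mono mult_left_mono integral_D_charfun_majorant_le(2)) auto
  also have "\<dots> = 16 * sqrt \<sigma>"
    using J'(3) by (simp add: sum_distrib_right[symmetric])
  finally show ?thesis .
qed

section \<open>The Fejer kernel\<close>

definition fejer :: "real \<Rightarrow> real" where
  "fejer z = 2 * integral {0..1} (\<lambda>t. (1 - t) * cos (t * z))"

lemma has_integral_fejer_weight:
  fixes z :: real
  shows "((\<lambda>t. (1 - t) * cos (t * z)) has_integral (if z = 0 then 1/2 else (1 - cos z) / z^2)) {0..1}"
proof (cases "z = 0")
  case True
  have "((\<lambda>t::real. 1 - t) has_integral ((1 - 1^2/2) - (0 - 0^2/2))) {0..1}"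
  proof (rule fundamental_theorem_of_calculus)
    fix t :: real
    have "((\<lambda>t::real. t - t^2/2) has_real_derivative 1 - t) (at t within {0..1})"
      by (auto intro!: derivative_eq_intros)
    then show "((\<lambda>t::real. t - t^2/2) has_vector_derivative 1 - t) (at t within {0..1})"
      by (simp add: has_real_derivative_iff_has_vector_derivative)
  qed simp
  then show ?thesis
    using True by simp
next
  case False
  define F where "F t = (1 - t) * sin (t * z) / z - cos (t * z) / z^2" for t
  have "((\<lambda>t. (1 - t) * cos (t * z)) has_integral (F 1 - F 0)) {0..1}"
  proof (rule fundamental_theorem_of_calculus)
    fix t :: real
    have "(F has_real_derivative (1 - t) * cos (t * z)) (at t within {0..1})"
      unfolding F_def using False
      by (auto intro!: derivative_eq_intros simp: field_simps power2_eq_square)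
    then show "(F has_vector_derivative (1 - t) * cos (t * z)) (at t within {0..1})"
      by (simp add: has_real_derivative_iff_has_vector_derivative)
  qed simp
  then show ?thesis
    using False by (simp add: F_def diff_divide_distrib)
qed

lemma fejer_eq: "fejer z = (if z = 0 then 1 else 2 * (1 - cos z) / z^2)"
  unfolding fejer_def using integral_unique[OF has_integral_fejer_weight[of z]] by simp

lemma fejer_nonneg: "0 \<le> fejer z"
  by (simp add: fejer_eq)

lemma fejer_ge_half:
  assumes "\<bar>z\<bar> \<le> 1"
  shows "1/2 \<le> fejer z"
proof (cases "z = 0")
  case False
  have "2 * (z^2/3) \<le> 2 * (1 - cos z)"
    using cos_le_quadratic[of z] assms by simp
  then have "2 * (z^2/3) / z^2 \<le> 2 * (1 - cos z) / z^2"
    by (rule divide_right_mono) simp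
  moreover have "2 * (z^2/3) / z^2 = 2/3"
    using False by simp
  moreover have "fejer z = 2 * (1 - cos z) / z^2"
    using False by (simp add: fejer_eq)
  ultimately show ?thesis
    by linarith
qed (simp add: fejer_eq)

text \<open>The row average of the Fejer kernel is the Fejer-weighted integral of the characteristic
  function of the row sum, which factorises over the independent entries.\<close>
lemma sum_PiE_fejer_le:
  assumes m: "2 \<le> m" and \<sigma>: "1 / real m \<le> \<sigma>" and J: "finite J" and x: "(\<Sum>j\<in>J. (x j)^2) = 1"
  shows "(\<Sum>r\<in>PiE J (\<lambda>_. D_vals m). fejer ((\<Sum>j\<in>J. r j * x j) / \<sigma>))
    \<le> (2 * real m + 1) ^ card J * (32 * sqrt \<sigma>)"
proof -
  define \<Omega> where "\<Omega> = PiE J (\<lambda>_. D_vals m)"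
  define N where "N = 2 * real m + 1"
  define w where "w r = (\<lambda>t. (1 - t) * cos (t * ((\<Sum>j\<in>J. r j * x j) / \<sigma>)))" for r
  have fin: "finite \<Omega>"
    using J by (simp add: \<Omega>_def D_vals_finite finite_PiE)
  have "0 < 1 / real m"
    using m by simp
  then have \<sigma>pos: "0 < \<sigma>"
    using \<sigma> by linarith
  have row_sum: "(\<Sum>r\<in>\<Omega>. w r t) = N ^ card J * ((1 - t) * (\<Prod>j\<in>J. D_charfun m (t * x j / \<sigma>)))"
    for t
  proof -
    have "(\<Sum>r\<in>\<Omega>. w r t) = (1 - t) * (\<Sum>r\<in>\<Omega>. cos (\<Sum>j\<in>J. (t * x j / \<sigma>) * r j))"
      by (simp add: w_def sum_distrib_left sum_divide_distrib mult_ac)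
    also have "(\<Sum>r\<in>\<Omega>. cos (\<Sum>j\<in>J. (t * x j / \<sigma>) * r j)) = (\<Prod>j\<in>J. \<Sum>d\<in>D_vals m. cos (t * x j / \<sigma> * d))"
      unfolding \<Omega>_def using J by (intro sum_PiE_cos_sum D_vals_finite D_vals_uminus)
    also have "\<dots> = (\<Prod>j\<in>J. N * D_charfun m (t * x j / \<sigma>))"
      unfolding N_def using m by (intro prod.cong refl sum_D_vals_cos) auto
    finally show ?thesis
      by (simp add: prod.distrib mult_ac)
  qed
  have "(\<Sum>r\<in>\<Omega>. fejer ((\<Sum>j\<in>J. r j * x j) / \<sigma>)) = 2 * (\<Sum>r\<in>\<Omega>. integral {0..1} (w r))"
    by (simp add: fejer_def w_def sum_distrib_left)
  also have "(\<Sum>r\<in>\<Omega>. integral {0..1} (w r)) = integral {0..1} (\<lambda>t. \<Sum>r\<in>\<Omega>. w r t)"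
    using fin \<sigma>pos by (intro integral_sum[symmetric] integrable_continuous_interval)
      (auto simp: w_def intro!: continuous_intros)
  also have "\<dots> = N ^ card J * integral {0..1} (\<lambda>t. (1 - t) * (\<Prod>j\<in>J. D_charfun m (t * x j / \<sigma>)))"
    by (simp add: row_sum)
  also have "2 * (N ^ card J * integral {0..1} (\<lambda>t. (1 - t) * (\<Prod>j\<in>J. D_charfun m (t * x j / \<sigma>))))
      \<le> 2 * (N ^ card J * (16 * sqrt \<sigma>))"
    using integral_prod_D_charfun_le[OF m \<sigma> J x] by (intro mult_left_mono) (simp_all add: N_def)
  finally show ?thesis
    by (simp add: \<Omega>_def N_def)
qed

definition dyadic_fejer :: "real \<Rightarrow> nat \<Rightarrow> real \<Rightarrow> real" where
  "dyadic_fejer \<epsilon> L y = (\<Sum>l\<le>L. (1/4)^l * fejer (y / (\<epsilon> * 2^l)))"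

lemma dyadic_fejer_nonneg: "0 \<le> dyadic_fejer \<epsilon> L y"
  unfolding dyadic_fejer_def by (intro sum_nonneg mult_nonneg_nonneg fejer_nonneg) auto

lemma dyadic_fejer_ge:
  assumes \<epsilon>: "0 < \<epsilon>" and y: "\<bar>y\<bar> \<le> \<epsilon> * 2^L"
  shows "1 / (8 * (1 + y^2 / \<epsilon>^2)) \<le> dyadic_fejer \<epsilon> L y"
proof -
  define l where "l = (LEAST l. \<bar>y\<bar> \<le> \<epsilon> * 2^l)"
  have l: "\<bar>y\<bar> \<le> \<epsilon> * 2^l" "l \<le> L"
    unfolding l_def using y by (auto intro: LeastI Least_le)
  have "(4::real)^l \<le> 4 * (1 + y^2 / \<epsilon>^2)"
  proof (cases l)
    case (Suc l')
    then have "\<epsilon> * 2^l' < \<bar>y\<bar>"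
      using not_less_Least[of l' "\<lambda>l. \<bar>y\<bar> \<le> \<epsilon> * 2^l"] by (simp add: l_def)
    then have "2^l' * \<epsilon> \<le> \<bar>y\<bar>"
      by (simp add: mult.commute)
    then have "(2^l')^2 \<le> (\<bar>y\<bar> / \<epsilon>)^2"
      using \<epsilon> by (intro power_mono) (simp_all add: pos_le_divide_eq)
    then show ?thesis
      using Suc by (simp add: power_divide power_mult[symmetric] mult.commute[of l' 2] power_mult)
  qed simp
  then have "1 / (8 * (1 + y^2 / \<epsilon>^2)) \<le> (1/4)^l * (1/2)"
    by (simp add: power_one_over field_simps add_pos_nonneg)
  also have "\<dots> \<le> (1/4)^l * fejer (y / (\<epsilon> * 2^l))"
    using l(1) \<epsilon> by (intro mult_left_mono fejer_ge_half) (simp_all add: abs_divide divide_le_eq)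
  also have "\<dots> \<le> dyadic_fejer \<epsilon> L y"
    unfolding dyadic_fejer_def using l(2)
    by (intro member_le_sum[where f = "\<lambda>l. (1/4)^l * fejer (y / (\<epsilon> * 2^l))"])
      (auto intro: mult_nonneg_nonneg fejer_nonneg)
  finally show ?thesis .
qed

lemma sum_quarter_power_mult_sqrt_le:
  fixes \<epsilon> :: real
  assumes "0 \<le> \<epsilon>"
  shows "(\<Sum>l\<le>L. (1/4)^l * sqrt (\<epsilon> * 2^l)) \<le> 2 * sqrt \<epsilon>"
proof -
  have "(1/4)^l * sqrt (\<epsilon> * 2^l) \<le> sqrt \<epsilon> * (1/2)^l" for l :: nat
  proof -
    have "sqrt ((2::real)^l) \<le> 2^l"
      by (intro real_le_lsqrt) (simp_all add: power2_eq_square power_increasing)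
    then have "sqrt \<epsilon> * ((1/4)^l * sqrt (2^l)) \<le> sqrt \<epsilon> * ((1/4)^l * 2^l)"
      using assms by (intro mult_left_mono) auto
    moreover have "(1/4::real)^l * 2^l = (1/2)^l"
      by (simp add: power_mult_distrib[symmetric])
    ultimately show ?thesis
      by (simp add: real_sqrt_mult mult_ac)
  qed
  then have "(\<Sum>l\<le>L. (1/4)^l * sqrt (\<epsilon> * 2^l)) \<le> sqrt \<epsilon> * (\<Sum>l\<le>L. (1/2)^l)"
    by (simp add: sum_distrib_left sum_mono)
  also have "(\<Sum>l\<le>L. (1/2::real)^l) = 2 - (1/2)^L"
    by (induction L) (simp_all add: power_one_over)
  also have "sqrt \<epsilon> * (2 - (1/2)^L) \<le> sqrt \<epsilon> * 2"
    using assms by (intro mult_left_mono) auto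
  finally show ?thesis
    by (simp add: mult.commute)
qed

lemma sum_PiE_dyadic_fejer_le:
  assumes m: "2 \<le> m" and \<epsilon>: "1 / real m \<le> \<epsilon>" and J: "finite J" and x: "(\<Sum>j\<in>J. (x j)^2) = 1"
  shows "(\<Sum>r\<in>PiE J (\<lambda>_. D_vals m). dyadic_fejer \<epsilon> L (\<Sum>j\<in>J. r j * x j))
    \<le> (2 * real m + 1) ^ card J * (64 * sqrt \<epsilon>)"
proof -
  define C where "C = (2 * real m + 1) ^ card J"
  have "0 < 1 / real m"
    using m by simp
  then have \<epsilon>pos: "0 < \<epsilon>"
    using \<epsilon> by linarith
  have "(\<Sum>r\<in>PiE J (\<lambda>_. D_vals m). dyadic_fejer \<epsilon> L (\<Sum>j\<in>J. r j * x j))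
      = (\<Sum>l\<le>L. (1/4)^l * (\<Sum>r\<in>PiE J (\<lambda>_. D_vals m). fejer ((\<Sum>j\<in>J. r j * x j) / (\<epsilon> * 2^l))))"
    unfolding dyadic_fejer_def by (simp add: sum_distrib_left sum.swap[of _ "{..L}"])
  also have "\<dots> \<le> (\<Sum>l\<le>L. (1/4)^l * (C * (32 * sqrt (\<epsilon> * 2^l))))"
  proof (intro sum_mono mult_left_mono)
    fix l
    have "\<epsilon> * 1 \<le> \<epsilon> * 2^l"
      using \<epsilon>pos by (intro mult_left_mono) auto
    then have "1 / real m \<le> \<epsilon> * 2^l"
      using \<epsilon> by linarith
    then show "(\<Sum>r\<in>PiE J (\<lambda>_. D_vals m). fejer ((\<Sum>j\<in>J. r j * x j) / (\<epsilon> * 2^l)))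
        \<le> C * (32 * sqrt (\<epsilon> * 2^l))"
      unfolding C_def using m J x by (intro sum_PiE_fejer_le)
  qed simp
  also have "\<dots> = C * 32 * (\<Sum>l\<le>L. (1/4)^l * sqrt (\<epsilon> * 2^l))"
    by (simp add: sum_distrib_left mult_ac)
  also have "\<dots> \<le> C * 32 * (2 * sqrt \<epsilon>)"
    using \<epsilon>pos by (intro mult_left_mono sum_quarter_power_mult_sqrt_le) (simp_all add: C_def)
  finally show ?thesis
    by (simp add: C_def)
qed

section \<open>Small ball probability\<close>

lemma one_le_prod_dyadic_fejer:
  fixes \<epsilon> :: real and y :: "'i \<Rightarrow> real"
  assumes \<epsilon>: "0 < \<epsilon>" and I: "finite I" and y: "\<And>i. i \<in> I \<Longrightarrow> \<bar>y i\<bar> \<le> \<epsilon> * 2^L"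
    and sum_sq: "(\<Sum>i\<in>I. (y i)^2) \<le> \<epsilon>^2 * card I"
  shows "1 \<le> (8 * exp 1) ^ card I * (\<Prod>i\<in>I. dyadic_fejer \<epsilon> L (y i))"
proof -
  define q where "q i = 1 + (y i)^2 / \<epsilon>^2" for i
  have q: "0 < q i" for i
    by (simp add: q_def add_pos_nonneg)
  have "(\<Prod>i\<in>I. q i) \<le> (\<Prod>i\<in>I. exp ((y i)^2 / \<epsilon>^2))"
    unfolding q_def by (intro prod_mono) (simp add: add_nonneg_nonneg)
  also have "\<dots> = exp ((\<Sum>i\<in>I. (y i)^2) / \<epsilon>^2)"
    using I by (simp add: exp_sum sum_divide_distrib)
  also have "\<dots> \<le> exp (real (card I))"
    using sum_sq \<epsilon> by (simp add: divide_le_eq mult.commute)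
  finally have "(\<Prod>i\<in>I. q i) \<le> exp 1 ^ card I"
    by (simp add: exp_of_nat_mult[symmetric])
  moreover have "0 < (\<Prod>i\<in>I. q i)"
    using q by (simp add: prod_pos)
  ultimately have "1 \<le> exp 1 ^ card I / (\<Prod>i\<in>I. q i)"
    by simp
  also have "\<dots> = (8 * exp 1) ^ card I * (1 / (8 ^ card I * (\<Prod>i\<in>I. q i)))"
    by (simp add: power_mult_distrib)
  also have "1 / (8 ^ card I * (\<Prod>i\<in>I. q i)) = (\<Prod>i\<in>I. 1 / (8 * q i))"
    by (simp add: prod_dividef prod.distrib)
  also have "\<dots> \<le> (\<Prod>i\<in>I. dyadic_fejer \<epsilon> L (y i))"
    unfolding q_def using \<epsilon> y by (intro prod_mono conjI dyadic_fejer_ge) (auto simp: add_pos_nonneg)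
  finally show ?thesis
    by simp
qed

lemma one_le_prod_dyadic_fejer_rows:
  fixes x :: "nat \<Rightarrow> real" and \<epsilon> :: real
  assumes \<epsilon>: "0 < \<epsilon>" and L: "real k \<le> \<epsilon> * 2^L" and x: "(\<Sum>j<k. (x j)^2) = 1"
    and R: "R \<in> PiE ({..<n} \<times> {..<k}) (\<lambda>_. D_vals m)" and norm: "matvec_norm n k R x \<le> \<epsilon> * sqrt (real n)"
  shows "1 \<le> (8 * exp 1) ^ n * (\<Prod>i<n. dyadic_fejer \<epsilon> L (\<Sum>j<k. R (i, j) * x j))"
proof -
  have "\<bar>\<Sum>j<k. R (i, j) * x j\<bar> \<le> \<epsilon> * 2^L" if "i < n" for i
  proof -
    have "\<bar>R (i, j) * x j\<bar> \<le> 1" if "j < k" for j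
    proof -
      have "\<bar>R (i, j)\<bar> \<le> 1"
        using R \<open>i < n\<close> \<open>j < k\<close> by (auto simp: PiE_iff intro: abs_D_vals_le_1)
      moreover have "\<bar>x j\<bar> \<le> 1"
        using \<open>j < k\<close> x by (intro abs_le_1_of_sum_squares_eq_1[of "{..<k}"]) auto
      ultimately show ?thesis
        by (simp add: abs_mult mult_le_one)
    qed
    then have "(\<Sum>j<k. \<bar>R (i, j) * x j\<bar>) \<le> (\<Sum>j<k. 1)"
      by (intro sum_mono) auto
    moreover have "\<bar>\<Sum>j<k. R (i, j) * x j\<bar> \<le> (\<Sum>j<k. \<bar>R (i, j) * x j\<bar>)"
      by (rule sum_abs)
    moreover have "(\<Sum>j<k. 1) = real k"
      by simp
    ultimately show ?thesis
      using L by linarith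
  qed
  moreover have "(\<Sum>i<n. (\<Sum>j<k. R (i, j) * x j)^2) \<le> \<epsilon>^2 * real n"
  proof -
    have "sqrt (\<Sum>i<n. (\<Sum>j<k. R (i, j) * x j)^2) \<le> sqrt (\<epsilon>^2 * real n)"
      using norm \<epsilon> by (simp add: matvec_norm_def real_sqrt_mult)
    then show ?thesis
      by simp
  qed
  ultimately show ?thesis
    using \<epsilon> one_le_prod_dyadic_fejer[of \<epsilon> "{..<n}" "\<lambda>i. \<Sum>j<k. R (i, j) * x j" L] by simp
qed

lemma sum_PiE_prod_dyadic_fejer_rows_le:
  assumes m: "2 \<le> m" and \<epsilon>: "1 / real m \<le> \<epsilon>" and x: "(\<Sum>j<k. (x j)^2) = 1"
  shows "(\<Sum>R\<in>PiE ({..<n} \<times> {..<k}) (\<lambda>_. D_vals m). \<Prod>i<n. dyadic_fejer \<epsilon> L (\<Sum>j<k. R (i, j) * x j))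
    \<le> ((2 * real m + 1) ^ k * (64 * sqrt \<epsilon>)) ^ n"
proof -
  have "(\<Sum>R\<in>PiE ({..<n} \<times> {..<k}) (\<lambda>_. D_vals m). \<Prod>i<n. dyadic_fejer \<epsilon> L (\<Sum>j<k. R (i, j) * x j))
      = (\<Sum>r\<in>PiE {..<k} (\<lambda>_. D_vals m). dyadic_fejer \<epsilon> L (\<Sum>j<k. r j * x j)) ^ n"
    using sum_PiE_prod_rows[where h = "\<lambda>r. dyadic_fejer \<epsilon> L (\<Sum>j<k. r j * x j)"
        and I = "{..<n}" and J = "{..<k}"] by (simp add: D_vals_finite)
  also have "\<dots> \<le> ((2 * real m + 1) ^ k * (64 * sqrt \<epsilon>)) ^ n"
    using sum_PiE_dyadic_fejer_le[OF m \<epsilon> _ x, of L]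
    by (intro power_mono sum_nonneg dyadic_fejer_nonneg) simp_all
  finally show ?thesis .
qed

lemma measure_rand_mat:
  assumes "0 < m"
  shows "measure_pmf.prob (rand_mat n k m) A =
    card (PiE ({..<n} \<times> {..<k}) (\<lambda>_. D_vals m) \<inter> A) / (2 * real m + 1) ^ (n * k)"
proof -
  have "PiE ({..<n} \<times> {..<k}) (\<lambda>_. D_vals m) \<noteq> {}"
    using zero_in_D_vals by (auto simp: PiE_eq_empty_iff)
  moreover have "card (PiE ({..<n} \<times> {..<k}) (\<lambda>_. D_vals m)) = (2 * m + 1) ^ (n * k)"
    using assms by (simp add: card_PiE card_D_vals)
  ultimately show ?thesis
    unfolding rand_mat_def
    by (simp add: measure_pmf_of_set finite_PiE D_vals_finite Int_commute add.commute)
qed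

lemma rand_mat_small_ball:
  fixes x :: "nat \<Rightarrow> real" and \<epsilon> :: real
  assumes m: "2 \<le> m" and \<epsilon>: "1 / real m \<le> \<epsilon>" and x: "(\<Sum>j<k. (x j)^2) = 1"
  shows "measure_pmf.prob (rand_mat n k m) {R. matvec_norm n k R x \<le> \<epsilon> * sqrt (real n)}
    \<le> (512 * exp 1 * sqrt \<epsilon>) ^ n"
proof -
  define \<Omega> where "\<Omega> = PiE ({..<n} \<times> {..<k}) (\<lambda>_. D_vals m)"
  define A where "A = {R. matvec_norm n k R x \<le> \<epsilon> * sqrt (real n)}"
  define N where "N = 2 * real m + 1"
  have "0 < 1 / real m"
    using m by simp
  then have \<epsilon>pos: "0 < \<epsilon>"
    using \<epsilon> by linarith
  obtain L where "real k / \<epsilon> < 2^L"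
    using real_arch_pow[of 2 "real k / \<epsilon>"] by auto
  then have L: "real k \<le> \<epsilon> * 2^L"
    using \<epsilon>pos by (simp add: divide_less_eq mult.commute)
  define G where "G R = (\<Prod>i<n. dyadic_fejer \<epsilon> L (\<Sum>j<k. R (i, j) * x j))" for R :: "nat \<times> nat \<Rightarrow> real"
  have "1 \<le> (8 * exp 1) ^ n * G R" if "R \<in> \<Omega> \<inter> A" for R
    unfolding G_def using that by (intro one_le_prod_dyadic_fejer_rows \<epsilon>pos L x) (auto simp: \<Omega>_def A_def)
  moreover have "0 \<le> G R" for R
    unfolding G_def by (intro prod_nonneg dyadic_fejer_nonneg)
  ultimately have "real (card (\<Omega> \<inter> A)) \<le> (\<Sum>R\<in>\<Omega>. (8 * exp 1) ^ n * G R)"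
    by (intro card_Int_le_sum) (auto simp: \<Omega>_def finite_PiE D_vals_finite)
  also have "\<dots> \<le> (8 * exp 1) ^ n * (N ^ k * (64 * sqrt \<epsilon>)) ^ n"
    unfolding sum_distrib_left[symmetric] \<Omega>_def G_def N_def
    by (intro mult_left_mono sum_PiE_prod_dyadic_fejer_rows_le m \<epsilon> x) simp
  also have "\<dots> = (8 * exp 1 * (64 * sqrt \<epsilon>)) ^ n * N ^ (n * k)"
    by (simp only: power_mult_distrib power_mult mult.commute[of n k] mult_ac)
  also have "8 * exp 1 * (64 * sqrt \<epsilon>) = 512 * exp 1 * sqrt \<epsilon>"
    by simp
  finally have card: "real (card (\<Omega> \<inter> A)) \<le> (512 * exp 1 * sqrt \<epsilon>) ^ n * N ^ (n * k)" .
  have "measure_pmf.prob (rand_mat n k m) A = real (card (\<Omega> \<inter> A)) / N ^ (n * k)"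
    using m by (simp add: measure_rand_mat \<Omega>_def N_def)
  also have "\<dots> \<le> (512 * exp 1 * sqrt \<epsilon>) ^ n"
    using card by (simp add: N_def divide_le_eq add_pos_nonneg)
  finally show ?thesis
    by (simp add: A_def)
qed

theorem claim4p2:
  shows "\<exists>c::real. c > 0 \<and>
    (\<forall>n k m :: nat. 1 \<le> k \<longrightarrow> k \<le> n \<longrightarrow> 2 \<le> m \<longrightarrow>
      (\<forall>(x :: nat \<Rightarrow> real) (\<epsilon> :: real).
         (\<Sum>j<k. (x j)\<^sup>2) = 1 \<longrightarrow>
         \<epsilon> \<ge> sqrt (log 2 (real m)) / real m \<longrightarrow>
         measure_pmf.prob (rand_mat n k m)
           {R. matvec_norm n k R x \<le> \<epsilon> * sqrt (real n)}
         \<le> (c * \<epsilon>) powr (real n / 2)))"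
proof (intro exI[of _ "(512 * exp 1)^2"] conjI allI impI)
  fix n k m :: nat and x :: "nat \<Rightarrow> real" and \<epsilon> :: real
  assume m: "2 \<le> m" and x: "(\<Sum>j<k. (x j)\<^sup>2) = 1" and \<epsilon>: "sqrt (log 2 (real m)) / real m \<le> \<epsilon>"
  have "1 \<le> sqrt (log 2 (real m))"
    using m by simp
  then have \<epsilon>_ge: "1 / real m \<le> \<epsilon>"
    using \<epsilon> divide_right_mono[of 1 "sqrt (log 2 (real m))" "real m"] by simp
  moreover have "0 < 1 / real m"
    using m by simp
  ultimately have "0 < (512 * exp 1)^2 * \<epsilon>"
    by (simp add: order_less_le_trans[of 0 "1 / real m" \<epsilon>])
  moreover have "measure_pmf.prob (rand_mat n k m) {R. matvec_norm n k R x \<le> \<epsilon> * sqrt (real n)}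
      \<le> sqrt ((512 * exp 1)^2 * \<epsilon>) ^ n"
    using rand_mat_small_ball[OF m \<epsilon>_ge x] by (simp add: real_sqrt_mult)
  ultimately show "measure_pmf.prob (rand_mat n k m) {R. matvec_norm n k R x \<le> \<epsilon> * sqrt (real n)}
      \<le> ((512 * exp 1)^2 * \<epsilon>) powr (real n / 2)"
    by (simp only: powr_half_eq_sqrt_power)
qed simp

end
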